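(* Let $t\in[n]$. If $S\subseteq N$ is $t$-switchable, then $P^{\langle t\rangle}_S$ contains $\mathcal{I}^{\langle t\rangle}$.
   Context: Fix positive integers $n, r_1,\dots,r_n$, let $N=[r_1]\times\cdots\times[r_n]$, and let $R$ be the polynomial ring over a field in the variables $x_a$, $a\in N$. For $a,b\in N$ and $i\in[n]$, ${\rm s}(i,a,b)\in N$ has $i$-th component $b_i$ and other components equal to those of $a$. Let $d(a,b)=\#\{j: a_j\neq b_j\}$ and $f_{i,a,b}=x_ax_b-x_{{\rm s}(i,a,b)}x_{{\rm s}(i,b,a)}$. Let $\mathcal{I}^{\langle t\rangle}=(f_{i,a,b}: a,b\in N,\ d(a,b)=2,\ i\in[t])$. A subset $S\subseteq N$ is $t$-switchable if for all $a,b\in S$ with $d(a,b)=2$ and all $i\in[t]$, ${\rm s}(i,a,b)\in S$. Elements $a,b\in S$ are connected in $S$ if there are $a_0=a,\dots,a_k=b$ in $S$ with $d(a_{j-1},a_j)\le 1$ for all $j$. For $t$-switchable $S$: $\tilde{\mathcal{I}}^{\langle t\rangle}_S=(f_{i,a,b}: i\in[t],\ a,b \text{ connected in } S)$, $\mathrm{Var}^{\langle t\rangle}_S=(x_a: a\notin S)$, $P^{\langle t\rangle}_S=\mathrm{Var}^{\langle t\rangle}_S+\tilde{\mathcal{I}}^{\langle t\rangle}_S$. *)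

theory Defs
  imports Main "HOL-Library.Poly_Mapping"
begin

text \<open>Points of N = [r_1] x ... x [r_n] are lists a of length n; the i-th
  component (i in {1..n}) is a ! (i - 1).\<close>

definition cube :: "nat \<Rightarrow> (nat \<Rightarrow> nat) \<Rightarrow> nat list set" where
  "cube n r = {a. length a = n \<and> (\<forall>i\<in>{1..n}. a ! (i - 1) \<in> {1..r i})}"

definition sw :: "nat \<Rightarrow> nat list \<Rightarrow> nat list \<Rightarrow> nat list" where
  "sw i a b = a[i - 1 := b ! (i - 1)]"

definition dst :: "nat list \<Rightarrow> nat list \<Rightarrow> nat" where
  "dst a b = card {j. j < length a \<and> a ! j \<noteq> b ! j}"

text \<open>Multivariate polynomials over 'k in the variables x_a (a a nat list).\<close>
type_synonym 'k mpoly = "(nat list \<Rightarrow>\<^sub>0 nat) \<Rightarrow>\<^sub>0 'k"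

definition var :: "nat list \<Rightarrow> 'k::field mpoly" where
  "var a = Poly_Mapping.single (Poly_Mapping.single a 1) 1"

text \<open>The polynomial ring R = k[x_a : a in N], as the set of polynomials
  involving only the variables indexed by N.\<close>
definition polyring :: "nat list set \<Rightarrow> 'k::field mpoly set" where
  "polyring N = {p. \<forall>m\<in>Poly_Mapping.keys p. Poly_Mapping.keys m \<subseteq> N}"

definition ideal_gen :: "'k::field mpoly set \<Rightarrow> 'k mpoly set \<Rightarrow> 'k mpoly set" where
  "ideal_gen R G = {x. \<exists>F c. finite F \<and> F \<subseteq> G \<and> (\<forall>g\<in>F. c g \<in> R) \<and> x = (\<Sum>g\<in>F. c g * g)}"

definition fpol :: "nat \<Rightarrow> nat list \<Rightarrow> nat list \<Rightarrow> 'k::field mpoly" where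
  "fpol i a b = var a * var b - var (sw i a b) * var (sw i b a)"

definition I_t :: "nat \<Rightarrow> (nat \<Rightarrow> nat) \<Rightarrow> nat \<Rightarrow> 'k::field mpoly set" where
  "I_t n r t = ideal_gen (polyring (cube n r))
     {fpol i a b | i a b. a \<in> cube n r \<and> b \<in> cube n r \<and> dst a b = 2 \<and> i \<in> {1..t}}"

definition switchable :: "nat \<Rightarrow> nat list set \<Rightarrow> bool" where
  "switchable t S \<longleftrightarrow> (\<forall>a\<in>S. \<forall>b\<in>S. dst a b = 2 \<longrightarrow> (\<forall>i\<in>{1..t}. sw i a b \<in> S))"

definition connected_in :: "nat list set \<Rightarrow> nat list \<Rightarrow> nat list \<Rightarrow> bool" where
  "connected_in S a b \<longleftrightarrow> a \<in> S \<and> b \<in> S \<and>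
     (\<lambda>x y. x \<in> S \<and> y \<in> S \<and> dst x y \<le> 1)\<^sup>*\<^sup>* a b"

definition Itilde :: "nat \<Rightarrow> (nat \<Rightarrow> nat) \<Rightarrow> nat \<Rightarrow> nat list set \<Rightarrow> 'k::field mpoly set" where
  "Itilde n r t S = ideal_gen (polyring (cube n r))
     {fpol i a b | i a b. i \<in> {1..t} \<and> connected_in S a b}"

definition VarS :: "nat \<Rightarrow> (nat \<Rightarrow> nat) \<Rightarrow> nat list set \<Rightarrow> 'k::field mpoly set" where
  "VarS n r S = ideal_gen (polyring (cube n r)) {var a | a. a \<in> cube n r \<and> a \<notin> S}"

definition P_S :: "nat \<Rightarrow> (nat \<Rightarrow> nat) \<Rightarrow> nat \<Rightarrow> nat list set \<Rightarrow> 'k::field mpoly set" where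
  "P_S n r t S = {x + y | x y. x \<in> VarS n r S \<and> y \<in> Itilde n r t S}"

end

theory Submission
  imports Defs
begin

text \<open>It suffices to put every generator f_{i,a,b} of I^<t> into P_S, since P_S is an ideal.
  Let s = s(i,a,b) and s' = s(i,b,a); we may assume a_i \<noteq> b_i, as otherwise f_{i,a,b} = 0.
  Then d(s,s') = d(a,b) = 2, and switching the i-th coordinate of s and s' gives back a and b.
  If a, b \<in> S, then s \<in> S by switchability and a, s, b is a path in S, so f_{i,a,b} lies in the
  connectivity ideal. Otherwise one of a, b lies outside S, and so does one of s, s' (else
  switchability would force a, b \<in> S); hence both monomials of f_{i,a,b} lie in Var_S.\<close>

lemma polyring_zero: "0 \<in> polyring N"
  unfolding polyring_def by simp

lemma polyring_one: "1 \<in> polyring N"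
  unfolding polyring_def by simp

lemma polyring_uminus: "p \<in> polyring N \<Longrightarrow> - p \<in> polyring N"
  unfolding polyring_def by (simp add: in_keys_iff)

lemma polyring_add:
  assumes "p \<in> polyring N" and "q \<in> polyring N"
  shows "p + q \<in> polyring N"
  using assms keys_add[of p q] unfolding polyring_def by blast

lemma polyring_mult:
  assumes "p \<in> polyring N" and "q \<in> polyring N"
  shows "p * q \<in> polyring N"
  unfolding polyring_def
proof (intro CollectI ballI subsetI)
  fix m x
  assume "m \<in> Poly_Mapping.keys (p * q)" and x: "x \<in> Poly_Mapping.keys m"
  then obtain u v where "m = u + v" "u \<in> Poly_Mapping.keys p" "v \<in> Poly_Mapping.keys q"
    using keys_mult[of p q] by blast
  then show "x \<in> N"
    using keys_add[of u v] assms x unfolding polyring_def by blast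
qed

lemma var_in_polyring: "a \<in> N \<Longrightarrow> var a \<in> polyring N"
  unfolding var_def polyring_def by simp

lemma ideal_gen_zero: "0 \<in> ideal_gen R G"
  unfolding ideal_gen_def by (intro CollectI exI[of _ "{}"]) auto

lemma ideal_gen_base: "g \<in> G \<Longrightarrow> g \<in> ideal_gen (polyring N) G"
  unfolding ideal_gen_def
  by (intro CollectI exI[of _ "{g}"] exI[of _ "\<lambda>_. 1"]) (auto simp: polyring_one)

lemma ideal_gen_add:
  assumes "x \<in> ideal_gen (polyring N) G" and "y \<in> ideal_gen (polyring N) G"
  shows "x + y \<in> ideal_gen (polyring N) G"
proof -
  obtain F1 c1 where F1: "finite F1" "F1 \<subseteq> G" "\<forall>g\<in>F1. c1 g \<in> polyring N"
    and x: "x = (\<Sum>g\<in>F1. c1 g * g)"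
    using assms(1) unfolding ideal_gen_def by blast
  obtain F2 c2 where F2: "finite F2" "F2 \<subseteq> G" "\<forall>g\<in>F2. c2 g \<in> polyring N"
    and y: "y = (\<Sum>g\<in>F2. c2 g * g)"
    using assms(2) unfolding ideal_gen_def by blast
  define c1' where "c1' g = (if g \<in> F1 then c1 g else 0)" for g
  define c2' where "c2' g = (if g \<in> F2 then c2 g else 0)" for g
  have "x = (\<Sum>g\<in>F1 \<union> F2. c1' g * g)" "y = (\<Sum>g\<in>F2 \<union> F1. c2' g * g)"
    unfolding x y c1'_def c2'_def using F1 F2
    by (auto intro!: sum.mono_neutral_cong_left)
  then have "x + y = (\<Sum>g\<in>F1 \<union> F2. (c1' g + c2' g) * g)"
    by (simp add: sum.distrib distrib_right Un_commute)
  moreover have "\<forall>g\<in>F1 \<union> F2. c1' g + c2' g \<in> polyring N"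
    using F1 F2 by (auto simp: c1'_def c2'_def intro!: polyring_add polyring_zero)
  ultimately show ?thesis
    using F1 F2 unfolding ideal_gen_def
    by (intro CollectI exI[of _ "F1 \<union> F2"] exI[of _ "\<lambda>g. c1' g + c2' g"]) auto
qed

lemma ideal_gen_mult:
  assumes "x \<in> ideal_gen (polyring N) G" and "p \<in> polyring N"
  shows "p * x \<in> ideal_gen (polyring N) G"
proof -
  obtain F c where F: "finite F" "F \<subseteq> G" "\<forall>g\<in>F. c g \<in> polyring N"
    and x: "x = (\<Sum>g\<in>F. c g * g)"
    using assms(1) unfolding ideal_gen_def by blast
  have "p * x = (\<Sum>g\<in>F. (p * c g) * g)"
    unfolding x by (simp add: sum_distrib_left mult.assoc)
  then show ?thesis
    using F assms(2) unfolding ideal_gen_def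
    by (intro CollectI exI[of _ F] exI[of _ "\<lambda>g. p * c g"]) (auto intro: polyring_mult)
qed

lemma ideal_gen_diff:
  assumes "x \<in> ideal_gen (polyring N) G" and "y \<in> ideal_gen (polyring N) G"
  shows "x - y \<in> ideal_gen (polyring N) G"
  using ideal_gen_add[OF assms(1) ideal_gen_mult[OF assms(2) polyring_uminus[OF polyring_one]]]
  by simp

lemma ideal_gen_least:
  assumes "G \<subseteq> J" and "0 \<in> J" and "\<And>x y. x \<in> J \<Longrightarrow> y \<in> J \<Longrightarrow> x + y \<in> J"
    and "\<And>p x. p \<in> R \<Longrightarrow> x \<in> J \<Longrightarrow> p * x \<in> J"
  shows "ideal_gen R G \<subseteq> J"
proof
  fix x assume "x \<in> ideal_gen R G"
  then obtain F c where "finite F" "F \<subseteq> G" "\<forall>g\<in>F. c g \<in> R" and x: "x = (\<Sum>g\<in>F. c g * g)"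
    unfolding ideal_gen_def by blast
  then show "x \<in> J"
    by (induction F arbitrary: x rule: finite_induct) (use assms in auto)
qed

lemma VarS_subset_P_S: "VarS n r S \<subseteq> P_S n r t S"
  unfolding P_S_def Itilde_def using ideal_gen_zero by force

lemma Itilde_subset_P_S: "Itilde n r t S \<subseteq> P_S n r t S"
  unfolding P_S_def VarS_def using ideal_gen_zero by force

lemma P_S_add:
  assumes "x \<in> P_S n r t S" and "y \<in> P_S n r t S"
  shows "x + y \<in> P_S n r t S"
proof -
  obtain u v where "x = u + v" "u \<in> VarS n r S" "v \<in> Itilde n r t S"
    using assms(1) unfolding P_S_def by blast
  moreover obtain u' v' where "y = u' + v'" "u' \<in> VarS n r S" "v' \<in> Itilde n r t S"
    using assms(2) unfolding P_S_def by blast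
  ultimately have "x + y = (u + u') + (v + v')" "u + u' \<in> VarS n r S" "v + v' \<in> Itilde n r t S"
    unfolding VarS_def Itilde_def by (auto simp: algebra_simps intro: ideal_gen_add)
  then show ?thesis unfolding P_S_def by blast
qed

lemma P_S_mult:
  assumes "p \<in> polyring (cube n r)" and "x \<in> P_S n r t S"
  shows "p * x \<in> P_S n r t S"
proof -
  obtain u v where "x = u + v" "u \<in> VarS n r S" "v \<in> Itilde n r t S"
    using assms(2) unfolding P_S_def by blast
  with assms(1) have "p * x = p * u + p * v" "p * u \<in> VarS n r S" "p * v \<in> Itilde n r t S"
    unfolding VarS_def Itilde_def by (auto simp: algebra_simps intro: ideal_gen_mult)
  then show ?thesis unfolding P_S_def by blast
qed

lemma length_sw [simp]: "length (sw i a b) = length a"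
  unfolding sw_def by simp

lemma nth_sw: "j < length a \<Longrightarrow> sw i a b ! j = (if j = i - 1 then b ! j else a ! j)"
  unfolding sw_def by simp

lemma sw_eq_self: "a ! (i - 1) = b ! (i - 1) \<Longrightarrow> sw i a b = a"
  unfolding sw_def by (metis list_update_id)

lemma sw_sw_sw:
  assumes "length a = length b"
  shows "sw i (sw i a b) (sw i b a) = a"
  using assms by (intro nth_equalityI) (auto simp: nth_sw)

lemma sw_in_cube:
  assumes "a \<in> cube n r" and "b \<in> cube n r"
  shows "sw i a b \<in> cube n r"
  unfolding cube_def
proof (intro CollectI conjI ballI)
  show "length (sw i a b) = n"
    using assms(1) unfolding cube_def by simp
  fix k assume k: "k \<in> {1..n}"
  then have "sw i a b ! (k - 1) \<in> {a ! (k - 1), b ! (k - 1)}"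
    using assms(1) unfolding cube_def by (auto simp: nth_sw)
  then show "sw i a b ! (k - 1) \<in> {1..r k}"
    using assms k unfolding cube_def by auto
qed

lemma dst_sym: "length a = length b \<Longrightarrow> dst a b = dst b a"
  unfolding dst_def by metis

lemma dst_sw_left: "dst a (sw i a b) \<le> 1"
proof -
  have "{j. j < length a \<and> a ! j \<noteq> sw i a b ! j} \<subseteq> {i - 1}"
    by (auto simp: nth_sw split: if_splits)
  then show ?thesis
    unfolding dst_def using card_mono[of "{i - 1}"] by fastforce
qed

lemma dst_sw_right:
  assumes "length a = length b" and "i - 1 < length a" and "a ! (i - 1) \<noteq> b ! (i - 1)"
  shows "dst (sw i a b) b = dst a b - 1"
proof -
  define D where "D = {j. j < length a \<and> a ! j \<noteq> b ! j}"
  have "{j. j < length (sw i a b) \<and> sw i a b ! j \<noteq> b ! j} = D - {i - 1}"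
    unfolding D_def by (auto simp: nth_sw split: if_splits)
  moreover have "i - 1 \<in> D" "finite D"
    using assms unfolding D_def by auto
  ultimately show ?thesis
    unfolding dst_def D_def[symmetric] by simp
qed

lemma dst_sw_sw:
  assumes "length a = length b"
  shows "dst (sw i a b) (sw i b a) = dst a b"
proof -
  have "{j. j < length (sw i a b) \<and> sw i a b ! j \<noteq> sw i b a ! j} = {j. j < length a \<and> a ! j \<noteq> b ! j}"
    using assms by (auto simp: nth_sw split: if_splits)
  then show ?thesis unfolding dst_def by simp
qed

lemma connected_in_via:
  assumes "a \<in> S" "c \<in> S" "b \<in> S" and "dst a c \<le> 1" "dst c b \<le> 1"
  shows "connected_in S a b"
proof -
  let ?R = "\<lambda>x y. x \<in> S \<and> y \<in> S \<and> dst x y \<le> 1"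
  have "?R a c" "?R c b"
    using assms by simp_all
  then have "?R\<^sup>*\<^sup>* a b"
    by (rule rtranclp.rtrancl_into_rtrancl[OF r_into_rtranclp])
  then show ?thesis
    unfolding connected_in_def using assms by simp
qed

lemma var_mult_in_VarS:
  assumes "a \<in> cube n r" "b \<in> cube n r" and "a \<notin> S \<or> b \<notin> S"
  shows "var a * var b \<in> VarS n r S"
proof -
  have var_in_VarS: "var c \<in> VarS n r S" if "c \<in> cube n r" "c \<notin> S" for c
    unfolding VarS_def using that by (intro ideal_gen_base) blast
  from assms(3) show ?thesis
  proof
    assume "a \<notin> S"
    then have "var b * var a \<in> VarS n r S"
      using var_in_VarS[OF assms(1)] var_in_polyring[OF assms(2)] ideal_gen_mult
      unfolding VarS_def by blast
    then show ?thesis by (simp add: mult.commute)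
  next
    assume "b \<notin> S"
    then show ?thesis
      using var_in_VarS[OF assms(2)] var_in_polyring[OF assms(1)] ideal_gen_mult
      unfolding VarS_def by blast
  qed
qed

lemma zero_in_P_S: "0 \<in> P_S n r t S"
  using VarS_subset_P_S ideal_gen_zero unfolding VarS_def by blast

lemma fpol_in_P_S:
  assumes a: "a \<in> cube n r" and b: "b \<in> cube n r" and dab: "dst a b = 2"
    and i: "i \<in> {1..t}" and "t \<le> n" and "switchable t S"
  shows "(fpol i a b :: 'k::field mpoly) \<in> P_S n r t S"
proof (cases "a ! (i - 1) = b ! (i - 1)")
  case True
  then have "(fpol i a b :: 'k mpoly) = 0"
    unfolding fpol_def by (simp add: sw_eq_self mult.commute)
  then show ?thesis by (simp add: zero_in_P_S)
next
  case differ: False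
  define s where "s = sw i a b"
  define s' where "s' = sw i b a"
  have len: "length a = n" "length b = n"
    using a b unfolding cube_def by auto
  have "i - 1 < n"
    using i \<open>t \<le> n\<close> by auto
  have switch: "sw i x y \<in> S" if "x \<in> S" "y \<in> S" "dst x y = 2" for x y
    using \<open>switchable t S\<close> i that unfolding switchable_def by blast
  show ?thesis
  proof (cases "a \<in> S \<and> b \<in> S")
    case True
    then have "s \<in> S"
      unfolding s_def using switch dab by blast
    moreover have "dst a s \<le> 1"
      unfolding s_def by (rule dst_sw_left)
    moreover have "dst s b \<le> 1"
      unfolding s_def using dst_sw_right[OF _ _ differ] len \<open>i - 1 < n\<close> dab by simp
    ultimately have "connected_in S a b"
      using True connected_in_via by blast
    then have "(fpol i a b :: 'k mpoly) \<in> Itilde n r t S"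
      unfolding Itilde_def using i by (intro ideal_gen_base) blast
    then show ?thesis using Itilde_subset_P_S by blast
  next
    case False
    have "dst s s' = 2" "dst s' s = 2"
      unfolding s_def s'_def using dst_sw_sw[of a b i] dst_sym[of "sw i a b" "sw i b a"] len dab
      by simp_all
    moreover have "sw i s s' = a" "sw i s' s = b"
      unfolding s_def s'_def using sw_sw_sw len by simp_all
    ultimately have "s \<notin> S \<or> s' \<notin> S"
      using False switch[of s s'] switch[of s' s] by auto
    have "(var a * var b :: 'k mpoly) \<in> VarS n r S"
      using False by (intro var_mult_in_VarS[OF a b]) blast
    moreover have "(var s * var s' :: 'k mpoly) \<in> VarS n r S"
      using \<open>s \<notin> S \<or> s' \<notin> S\<close> unfolding s_def s'_def
      by (rule var_mult_in_VarS[OF sw_in_cube[OF a b] sw_in_cube[OF b a]])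
    ultimately have "(fpol i a b :: 'k mpoly) \<in> VarS n r S"
      unfolding fpol_def VarS_def s_def s'_def by (rule ideal_gen_diff)
    then show ?thesis using VarS_subset_P_S by blast
  qed
qed

theorem proposition4p2:
  fixes n t :: nat and r :: "nat \<Rightarrow> nat" and S :: "nat list set"
  assumes "\<forall>i\<in>{1..n}. 0 < r i"
    and "t \<in> {1..n}"
    and "S \<subseteq> cube n r"
    and "switchable t S"
  shows "(I_t n r t :: 'k::field mpoly set) \<subseteq> P_S n r t S"
  unfolding I_t_def
proof (rule ideal_gen_least)
  show "{fpol i a b | i a b. a \<in> cube n r \<and> b \<in> cube n r \<and> dst a b = 2 \<and> i \<in> {1..t}}
      \<subseteq> (P_S n r t S :: 'k mpoly set)"
  proof clarify
    fix i a b
    assume "a \<in> cube n r" "b \<in> cube n r" "dst a b = 2" "i \<in> {1..t}"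
    moreover have "t \<le> n" using assms(2) by simp
    ultimately show "(fpol i a b :: 'k mpoly) \<in> P_S n r t S"
      using assms(4) by (rule fpol_in_P_S)
  qed
qed (fact zero_in_P_S P_S_add P_S_mult)+

end
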